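(* Let $T$ be a complete first-order theory with monster model $\mathcal{U}$, $A\subseteq\mathcal{U}$ small, $\mu\in\mathfrak{M}_x(\mathcal{U})$, and $f:\mathcal{U}^x\to\mathcal{U}^y$ an $A$-definable function. Then $\mu\geq_{\mathbb{E},A} f(\mu)$.
   Context: For $B\subseteq\mathcal{U}$, $\mathcal{L}_x(B)$ is the Boolean algebra of formulas in $x$ with parameters from $B$ modulo $T$, identified with a subalgebra of $\mathcal{L}_{xy}(B)$ via $\varphi(x)\mapsto\varphi(x)\wedge y=y$; $\mathfrak{M}_x(B)$ is the set of finitely additive probability measures (Keisler measures) on $\mathcal{L}_x(B)$. For $\omega\in\mathfrak{M}_{xy}(B)$, $\pi_x(\omega)(\varphi(x))=\omega(\varphi(x)\wedge y=y)$ (similarly $\pi_y$); $\omega|_C$ is restriction to $\mathcal{L}_{xy}(C)$. The push-forward $f(\mu)\in\mathfrak{M}_y(\mathcal{U})$ is $f(\mu)(\psi(y))=\mu(\psi(f(x)))$. For $\mu\in\mathfrak{M}_x(\mathcal{U})$, $\nu\in\mathfrak{M}_y(\mathcal{U})$ ($x,y$ disjoint) and small $A$: $\mu\geq_{\mathbb{E},A}\nu$ means there is $\lambda\in\mathfrak{M}_{xy}(A)$ with $\pi_x(\lambda)=\mu|_A$ such that every $\omega\in\mathfrak{M}_{xy}(\mathcal{U})$ with $\omega|_A=\lambda$ and $\pi_x(\omega)=\mu$ satisfies $\pi_y(\omega)=\nu$. *)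

theory Defs
  imports Complex_Main
begin

datatype ('f, 'a) trm = Var nat | Par 'a | App 'f "('f, 'a) trm list"

datatype ('f, 'r, 'a) fm =
    FEq "('f, 'a) trm" "('f, 'a) trm"
  | FRel 'r "('f, 'a) trm list"
  | FNeg "('f, 'r, 'a) fm"
  | FConj "('f, 'r, 'a) fm" "('f, 'r, 'a) fm"
  | FEx nat "('f, 'r, 'a) fm"

text \<open>A structure with universe UNIV :: 'a set: interpretations of the
function and relation symbols.\<close>
type_synonym ('f, 'r, 'a) struc = "('f \<Rightarrow> 'a list \<Rightarrow> 'a) \<times> ('r \<Rightarrow> 'a list \<Rightarrow> bool)"

fun eval_trm :: "('f \<Rightarrow> 'a list \<Rightarrow> 'a) \<Rightarrow> (nat \<Rightarrow> 'a) \<Rightarrow> ('f, 'a) trm \<Rightarrow> 'a" where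
  "eval_trm F v (Var i) = v i"
| "eval_trm F v (Par a) = a"
| "eval_trm F v (App f ts) = F f (map (eval_trm F v) ts)"

fun sat :: "('f, 'r, 'a) struc \<Rightarrow> (nat \<Rightarrow> 'a) \<Rightarrow> ('f, 'r, 'a) fm \<Rightarrow> bool" where
  "sat M v (FEq s t) = (eval_trm (fst M) v s = eval_trm (fst M) v t)"
| "sat M v (FRel r ts) = snd M r (map (eval_trm (fst M) v) ts)"
| "sat M v (FNeg \<phi>) = (\<not> sat M v \<phi>)"
| "sat M v (FConj \<phi> \<psi>) = (sat M v \<phi> \<and> sat M v \<psi>)"
| "sat M v (FEx i \<phi>) = (\<exists>a. sat M (v(i := a)) \<phi>)"

fun fv_trm :: "('f, 'a) trm \<Rightarrow> nat set" where
  "fv_trm (Var i) = {i}"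
| "fv_trm (Par a) = {}"
| "fv_trm (App f ts) = (\<Union>t\<in>set ts. fv_trm t)"

fun fv :: "('f, 'r, 'a) fm \<Rightarrow> nat set" where
  "fv (FEq s t) = fv_trm s \<union> fv_trm t"
| "fv (FRel r ts) = (\<Union>t\<in>set ts. fv_trm t)"
| "fv (FNeg \<phi>) = fv \<phi>"
| "fv (FConj \<phi> \<psi>) = fv \<phi> \<union> fv \<psi>"
| "fv (FEx i \<phi>) = fv \<phi> - {i}"

fun params_trm :: "('f, 'a) trm \<Rightarrow> 'a set" where
  "params_trm (Var i) = {}"
| "params_trm (Par a) = {a}"
| "params_trm (App f ts) = (\<Union>t\<in>set ts. params_trm t)"

fun params :: "('f, 'r, 'a) fm \<Rightarrow> 'a set" where
  "params (FEq s t) = params_trm s \<union> params_trm t"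
| "params (FRel r ts) = (\<Union>t\<in>set ts. params_trm t)"
| "params (FNeg \<phi>) = params \<phi>"
| "params (FConj \<phi> \<psi>) = params \<phi> \<union> params \<psi>"
| "params (FEx i \<phi>) = params \<phi>"

text \<open>Smallness relative to the saturation cardinal, given as the cardinality of a set K.\<close>
definition small :: "'k set \<Rightarrow> 'a set \<Rightarrow> bool" where
  "small K A \<longleftrightarrow> ordLess2 (card_of A) (card_of K)"

definition saturated :: "('f, 'r, 'a) struc \<Rightarrow> 'k set \<Rightarrow> bool" where
  "saturated M K \<longleftrightarrow>
     (\<forall>A p. small K A \<and> (\<forall>\<phi>\<in>p. params \<phi> \<subseteq> A \<and> fv \<phi> \<subseteq> {0}) \<and>
        (\<forall>q. q \<subseteq> p \<and> finite q \<longrightarrow> (\<exists>a. \<forall>\<phi>\<in>q. sat M (\<lambda>_. a) \<phi>))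
      \<longrightarrow> (\<exists>a. \<forall>\<phi>\<in>p. sat M (\<lambda>_. a) \<phi>))"

definition automorphism :: "('f, 'r, 'a) struc \<Rightarrow> ('a \<Rightarrow> 'a) \<Rightarrow> bool" where
  "automorphism M \<sigma> \<longleftrightarrow> bij \<sigma> \<and>
     (\<forall>f as. \<sigma> (fst M f as) = fst M f (map \<sigma> as)) \<and>
     (\<forall>r as. snd M r as = snd M r (map \<sigma> as))"

definition partial_elementary :: "('f, 'r, 'a) struc \<Rightarrow> 'a set \<Rightarrow> ('a \<Rightarrow> 'a) \<Rightarrow> bool" where
  "partial_elementary M A h \<longleftrightarrow>
     (\<forall>\<phi> :: ('f, 'r, 'a) fm. \<forall>v. params \<phi> \<subseteq> A \<and> fv \<phi> = {} \<longrightarrow>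
        (sat M v \<phi> \<longleftrightarrow> sat M v (map_fm id id h \<phi>)))"

definition strongly_homogeneous :: "('f, 'r, 'a) struc \<Rightarrow> 'k set \<Rightarrow> bool" where
  "strongly_homogeneous M K \<longleftrightarrow>
     (\<forall>A h. small K A \<and> partial_elementary M A h \<longrightarrow>
        (\<exists>\<sigma>. automorphism M \<sigma> \<and> (\<forall>a\<in>A. \<sigma> a = h a)))"

text \<open>A monster model: kappa-saturated and strongly kappa-homogeneous, kappa = |K|
infinite and larger than the language. T is its complete theory.\<close>
definition monster :: "('f, 'r, 'a) struc \<Rightarrow> 'k set \<Rightarrow> bool" where
  "monster M K \<longleftrightarrow> infinite K \<and> ordLess2 (card_of (UNIV :: ('f + 'r) set)) (card_of K) \<and>
     saturated M K \<and> strongly_homogeneous M K"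

text \<open>Elements of L_x(B) for an n-tuple of variables x (variables 0..n-1),
represented by the subsets of U^n they define (formulas modulo T with
parameters from B are identified exactly when they define the same set in U).\<close>
definition defset :: "('f, 'r, 'a) struc \<Rightarrow> nat \<Rightarrow> 'a set \<Rightarrow> 'a list set \<Rightarrow> bool" where
  "defset M n B D \<longleftrightarrow> (\<exists>\<phi> :: ('f, 'r, 'a) fm. params \<phi> \<subseteq> B \<and> fv \<phi> \<subseteq> {..<n} \<and>
       D = {as. length as = n \<and> sat M (\<lambda>i. as ! i) \<phi>})"

definition keisler :: "('f, 'r, 'a) struc \<Rightarrow> nat \<Rightarrow> 'a set \<Rightarrow> ('a list set \<Rightarrow> real) \<Rightarrow> bool" where
  "keisler M n B \<mu> \<longleftrightarrow>
     (\<forall>D. defset M n B D \<longrightarrow> 0 \<le> \<mu> D) \<and>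
     \<mu> {as. length as = n} = 1 \<and>
     (\<forall>D E. defset M n B D \<and> defset M n B E \<and> D \<inter> E = {} \<longrightarrow> \<mu> (D \<union> E) = \<mu> D + \<mu> E)"

definition pi_x :: "nat \<Rightarrow> nat \<Rightarrow> ('a list set \<Rightarrow> real) \<Rightarrow> 'a list set \<Rightarrow> real" where
  "pi_x n m \<omega> D = \<omega> {as @ bs | as bs. as \<in> D \<and> length bs = m}"

definition pi_y :: "nat \<Rightarrow> nat \<Rightarrow> ('a list set \<Rightarrow> real) \<Rightarrow> 'a list set \<Rightarrow> real" where
  "pi_y n m \<omega> E = \<omega> {as @ bs | as bs. length as = n \<and> bs \<in> E}"

definition deffun :: "('f, 'r, 'a) struc \<Rightarrow> nat \<Rightarrow> nat \<Rightarrow> 'a set \<Rightarrow> ('a list \<Rightarrow> 'a list) \<Rightarrow> bool" where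
  "deffun M n m A f \<longleftrightarrow> (\<forall>as. length as = n \<longrightarrow> length (f as) = m) \<and>
     defset M (n + m) A {as @ f as | as. length as = n}"

definition pushforward :: "nat \<Rightarrow> ('a list \<Rightarrow> 'a list) \<Rightarrow> ('a list set \<Rightarrow> real) \<Rightarrow> 'a list set \<Rightarrow> real" where
  "pushforward n f \<mu> E = \<mu> {as. length as = n \<and> f as \<in> E}"

definition geqE :: "('f, 'r, 'a) struc \<Rightarrow> nat \<Rightarrow> nat \<Rightarrow> 'a set \<Rightarrow>
    ('a list set \<Rightarrow> real) \<Rightarrow> ('a list set \<Rightarrow> real) \<Rightarrow> bool" where
  "geqE M n m A \<mu> \<nu> \<longleftrightarrow>
     (\<exists>lam. keisler M (n + m) A lam \<and>
        (\<forall>D. defset M n A D \<longrightarrow> pi_x n m lam D = \<mu> D) \<and>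
        (\<forall>\<omega>. keisler M (n + m) UNIV \<omega> \<and>
              (\<forall>D. defset M (n + m) A D \<longrightarrow> \<omega> D = lam D) \<and>
              (\<forall>D. defset M n UNIV D \<longrightarrow> pi_x n m \<omega> D = \<mu> D)
           \<longrightarrow> (\<forall>E. defset M m UNIV E \<longrightarrow> pi_y n m \<omega> E = \<nu> E)))"

end

theory Submission
  imports Defs
begin

text \<open>Let G be the graph of f and \<lambda> the push-forward of \<mu> along x \<mapsto> (x, f x),
restricted to A-definable sets. Any \<omega> extending \<lambda> gives G measure \<lambda>(G) = 1, so \<omega> is
concentrated on G. On G the cylinder U^x \<times> E coincides with f^-1(E) \<times> U^y, hence
\<pi>_y(\<omega>)(E) = \<omega>(f^-1(E) \<times> U^y) = \<mu>(f^-1(E)) whenever \<pi>_x(\<omega>) = \<mu>.\<close>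

lemma eval_trm_cong: "(\<forall>i\<in>fv_trm t. v i = w i) \<Longrightarrow> eval_trm F v t = eval_trm F w t"
  by (induction t) (auto cong: map_cong)

lemma sat_cong: "(\<forall>i\<in>fv \<phi>. v i = w i) \<Longrightarrow> sat M v \<phi> = sat M w \<phi>"
proof (induction \<phi> arbitrary: v w)
  case (FEq s t)
  then show ?case using eval_trm_cong[of s v w] eval_trm_cong[of t v w] by auto
next
  case (FRel r ts)
  then have "map (eval_trm (fst M) v) ts = map (eval_trm (fst M) w) ts"
    by (auto intro!: eval_trm_cong)
  then show ?case by (simp only: sat.simps)
next
  case (FEx i \<phi>)
  then have "sat M (v(i := a)) \<phi> = sat M (w(i := a)) \<phi>" for a by auto
  then show ?case by simp
next
  case (FConj \<phi> \<psi>)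
  then have "sat M v \<phi> = sat M w \<phi>" "sat M v \<psi> = sat M w \<psi>" by auto
  then show ?case by simp
qed auto

fun rename_trm :: "(nat \<Rightarrow> nat) \<Rightarrow> ('f, 'a) trm \<Rightarrow> ('f, 'a) trm" where
  "rename_trm g (Var i) = Var (g i)"
| "rename_trm g (Par a) = Par a"
| "rename_trm g (App h ts) = App h (map (rename_trm g) ts)"

fun rename :: "(nat \<Rightarrow> nat) \<Rightarrow> ('f, 'r, 'a) fm \<Rightarrow> ('f, 'r, 'a) fm" where
  "rename g (FEq s t) = FEq (rename_trm g s) (rename_trm g t)"
| "rename g (FRel r ts) = FRel r (map (rename_trm g) ts)"
| "rename g (FNeg \<phi>) = FNeg (rename g \<phi>)"
| "rename g (FConj \<phi> \<psi>) = FConj (rename g \<phi>) (rename g \<psi>)"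
| "rename g (FEx i \<phi>) = FEx (g i) (rename g \<phi>)"

lemma eval_trm_rename: "eval_trm F v (rename_trm g t) = eval_trm F (v \<circ> g) t"
  by (induction t) (auto cong: map_cong)

lemma fv_trm_rename: "fv_trm (rename_trm g t) = g ` fv_trm t"
  by (induction t) auto

lemma params_trm_rename: "params_trm (rename_trm g t) = params_trm t"
  by (induction t) auto

lemma fv_rename: "inj g \<Longrightarrow> fv (rename g \<phi>) = g ` fv \<phi>"
  by (induction \<phi>) (auto simp: fv_trm_rename inj_def)

lemma params_rename: "params (rename g \<phi>) = params \<phi>"
  by (induction \<phi>) (auto simp: params_trm_rename)

lemma sat_rename: "inj g \<Longrightarrow> sat M v (rename g \<phi>) = sat M (v \<circ> g) \<phi>"
proof (induction \<phi> arbitrary: v)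
  case (FEx i \<phi>)
  then have "(v(g i := a)) \<circ> g = (v \<circ> g)(i := a)" for a by (auto simp: inj_def)
  with FEx show ?case by (simp only: sat.simps rename.simps)
qed (auto simp: eval_trm_rename comp_def)

lemma defset_length: "defset M k B D \<Longrightarrow> D \<subseteq> {cs. length cs = k}"
  unfolding defset_def by auto

lemma defset_mono: "defset M k B D \<Longrightarrow> B \<subseteq> C \<Longrightarrow> defset M k C D"
  unfolding defset_def by blast

lemma defset_all: "defset M k B {cs. length cs = k}"
  unfolding defset_def by (intro exI[of _ "FEx 0 (FEq (Var 0) (Var 0))"]) auto

lemma defset_Int: "defset M k B D \<Longrightarrow> defset M k B E \<Longrightarrow> defset M k B (D \<inter> E)"
  unfolding defset_def by (elim exE, rename_tac \<phi> \<psi>, rule_tac x = "FConj \<phi> \<psi>" in exI) auto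

lemma defset_Diff: "defset M k B D \<Longrightarrow> defset M k B E \<Longrightarrow> defset M k B (D - E)"
  unfolding defset_def by (elim exE, rename_tac \<phi> \<psi>, rule_tac x = "FConj \<phi> (FNeg \<psi>)" in exI) auto

lemma defset_project_last:
  assumes "defset M (Suc k) B D"
  shows "defset M k B {cs. length cs = k \<and> (\<exists>b. cs @ [b] \<in> D)}"
proof -
  obtain \<phi> where \<phi>: "params \<phi> \<subseteq> B" "fv \<phi> \<subseteq> {..<Suc k}"
    and D: "D = {cs. length cs = Suc k \<and> sat M (\<lambda>i. cs ! i) \<phi>}"
    using assms unfolding defset_def by blast
  have "sat M ((\<lambda>i. cs ! i)(k := b)) \<phi> = sat M (\<lambda>i. (cs @ [b]) ! i) \<phi>"
    if "length cs = k" for cs b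
    using that \<phi>(2) by (intro sat_cong) (auto simp: nth_append)
  then have "{cs. length cs = k \<and> (\<exists>b. cs @ [b] \<in> D)} =
      {cs. length cs = k \<and> sat M (\<lambda>i. cs ! i) (FEx k \<phi>)}"
    using D by auto
  moreover have "params (FEx k \<phi>) \<subseteq> B" "fv (FEx k \<phi>) \<subseteq> {..<k}"
    using \<phi> by auto
  ultimately show ?thesis
    unfolding defset_def by blast
qed

lemma defset_project:
  "defset M (n + m) B D \<Longrightarrow>
   defset M n B {as. length as = n \<and> (\<exists>bs. length bs = m \<and> as @ bs \<in> D)}"
proof (induction m arbitrary: D)
  case 0
  then have "{as. length as = n \<and> (\<exists>bs. length bs = 0 \<and> as @ bs \<in> D)} = D"
    using defset_length[of M n B D] by auto
  with 0 show ?case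
    by simp
next
  case (Suc m)
  let ?D = "{cs. length cs = n + m \<and> (\<exists>b. cs @ [b] \<in> D)}"
  have "{as. length as = n \<and> (\<exists>bs. length bs = Suc m \<and> as @ bs \<in> D)} =
      {as. length as = n \<and> (\<exists>bs. length bs = m \<and> as @ bs \<in> ?D)}"
    by (auto simp: length_Suc_conv_rev)
  with Suc.IH[OF defset_project_last] Suc.prems show ?case
    by simp
qed

lemma append_set_eq_take_drop:
  "{as @ bs | as bs. length as = n \<and> length bs = m \<and> P as bs} =
   {cs. length cs = n + m \<and> P (take n cs) (drop n cs)}"
proof -
  have "cs \<in> {as @ bs | as bs. length as = n \<and> length bs = m \<and> P as bs}"
    if "length cs = n + m" "P (take n cs) (drop n cs)" for cs
    using that by (intro CollectI exI[of _ "take n cs"] exI[of _ "drop n cs"]) auto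
  then show ?thesis
    by auto
qed

lemma defset_cylinder:
  assumes "defset M n B F"
  shows "defset M (n + m) B {as @ bs | as bs. as \<in> F \<and> length bs = m}"
proof -
  obtain \<phi> where \<phi>: "params \<phi> \<subseteq> B" "fv \<phi> \<subseteq> {..<n}"
    and F: "F = {as. length as = n \<and> sat M (\<lambda>i. as ! i) \<phi>}"
    using assms unfolding defset_def by blast
  have "{as @ bs | as bs. as \<in> F \<and> length bs = m} =
      {as @ bs | as bs. length as = n \<and> length bs = m \<and> sat M (\<lambda>i. as ! i) \<phi>}"
    using F by auto
  also have "\<dots> = {cs. length cs = n + m \<and> sat M (\<lambda>i. take n cs ! i) \<phi>}"
    by (rule append_set_eq_take_drop)
  also have "\<dots> = {cs. length cs = n + m \<and> sat M (\<lambda>i. cs ! i) \<phi>}"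
  proof -
    have "sat M (\<lambda>i. take n cs ! i) \<phi> = sat M (\<lambda>i. cs ! i) \<phi>" for cs
      using \<phi>(2) by (intro sat_cong) auto
    then show ?thesis
      by simp
  qed
  finally show ?thesis
    using \<phi> unfolding defset_def by (intro exI[of _ \<phi>]) auto
qed

lemma defset_shift:
  assumes "defset M m B E"
  shows "defset M (n + m) B {as @ bs | as bs. length as = n \<and> bs \<in> E}"
proof -
  obtain \<phi> where \<phi>: "params \<phi> \<subseteq> B" "fv \<phi> \<subseteq> {..<m}"
    and E: "E = {bs. length bs = m \<and> sat M (\<lambda>i. bs ! i) \<phi>}"
    using assms unfolding defset_def by blast
  define \<psi> where "\<psi> = rename (\<lambda>i. i + n) \<phi>"
  have inj: "inj (\<lambda>i::nat. i + n)"
    by (simp add: inj_def)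
  have "{as @ bs | as bs. length as = n \<and> bs \<in> E} =
      {as @ bs | as bs. length as = n \<and> length bs = m \<and> sat M (\<lambda>i. bs ! i) \<phi>}"
    using E by auto
  also have "\<dots> = {cs. length cs = n + m \<and> sat M (\<lambda>i. drop n cs ! i) \<phi>}"
    by (rule append_set_eq_take_drop)
  also have "\<dots> = {cs. length cs = n + m \<and> sat M (\<lambda>i. cs ! i) \<psi>}"
    unfolding \<psi>_def sat_rename[OF inj] by (auto simp: comp_def add.commute)
  finally show ?thesis
    using \<phi> unfolding defset_def
    by (intro exI[of _ \<psi>]) (auto simp: \<psi>_def fv_rename[OF inj] params_rename)
qed

lemma keisler_nonneg: "keisler M k B \<mu> \<Longrightarrow> defset M k B D \<Longrightarrow> 0 \<le> \<mu> D"
  unfolding keisler_def by blast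

lemma keisler_all: "keisler M k B \<mu> \<Longrightarrow> \<mu> {cs. length cs = k} = 1"
  unfolding keisler_def by blast

lemma keisler_Un: "keisler M k B \<mu> \<Longrightarrow> defset M k B D \<Longrightarrow> defset M k B E \<Longrightarrow>
    D \<inter> E = {} \<Longrightarrow> \<mu> (D \<union> E) = \<mu> D + \<mu> E"
  unfolding keisler_def by blast

lemma keisler_Int_Diff:
  assumes "keisler M k B \<mu>" "defset M k B D" "defset M k B E"
  shows "\<mu> D = \<mu> (D \<inter> E) + \<mu> (D - E)"
proof -
  have "\<mu> ((D \<inter> E) \<union> (D - E)) = \<mu> (D \<inter> E) + \<mu> (D - E)"
    using assms by (intro keisler_Un defset_Int defset_Diff) auto
  then show ?thesis
    by (simp add: Un_Diff_Int Un_commute)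
qed

lemma keisler_Int_full:
  assumes \<mu>: "keisler M k B \<mu>" and D: "defset M k B D" and G: "defset M k B G"
    and full: "\<mu> G = 1"
  shows "\<mu> D = \<mu> (D \<inter> G)"
proof -
  let ?U = "{cs. length cs = k}"
  have U: "defset M k B ?U"
    by (rule defset_all)
  have "\<mu> (?U - G) = 0"
    using keisler_Int_Diff[OF \<mu> U G] keisler_all[OF \<mu>] full defset_length[OF G]
    by (simp add: Int_absorb1)
  moreover have "(?U - G) \<inter> D = D - G"
    using defset_length[OF D] by auto
  then have "\<mu> (?U - G) = \<mu> (D - G) + \<mu> (?U - G - D)"
    using keisler_Int_Diff[OF \<mu> defset_Diff[OF U G] D] by simp
  moreover have "0 \<le> \<mu> (D - G)" "0 \<le> \<mu> (?U - G - D)"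
    using keisler_nonneg[OF \<mu>] D G U by (auto intro: defset_Diff)
  ultimately have "\<mu> (D - G) = 0"
    by linarith
  then show ?thesis
    using keisler_Int_Diff[OF \<mu> D G] by simp
qed

lemma deffun_length: "deffun M n m A f \<Longrightarrow> length as = n \<Longrightarrow> length (f as) = m"
  unfolding deffun_def by blast

lemma defset_graph: "deffun M n m A f \<Longrightarrow> defset M (n + m) A {as @ f as | as. length as = n}"
  unfolding deffun_def by blast

lemma defset_graph_preimage:
  assumes f: "deffun M n m A f" and D: "defset M (n + m) B D"
  shows "defset M n (A \<union> B) {as. length as = n \<and> as @ f as \<in> D}"
proof -
  let ?G = "{as @ f as | as. length as = n}"
  have "{as. length as = n \<and> as @ f as \<in> D} =
      {as. length as = n \<and> (\<exists>bs. length bs = m \<and> as @ bs \<in> ?G \<inter> D)}"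
  proof (intro Collect_cong iffI)
    fix as
    assume "length as = n \<and> (\<exists>bs. length bs = m \<and> as @ bs \<in> ?G \<inter> D)"
    then obtain bs as' where "length as = n" "as @ bs \<in> D" "as @ bs = as' @ f as'" "length as' = n"
      by blast
    then show "length as = n \<and> as @ f as \<in> D"
      by (simp add: append_eq_append_conv)
  qed (use deffun_length[OF f] in blast)
  moreover have "defset M (n + m) (A \<union> B) (?G \<inter> D)"
    using defset_mono[OF defset_graph[OF f]] defset_mono[OF D] by (intro defset_Int) auto
  ultimately show ?thesis
    using defset_project[of M n m "A \<union> B" "?G \<inter> D"] by simp
qed

lemma keisler_pushforward_graph:
  assumes \<mu>: "keisler M n C \<mu>" and f: "deffun M n m A f" and C: "A \<union> B \<subseteq> C"
  shows "keisler M (n + m) B (pushforward n (\<lambda>as. as @ f as) \<mu>)"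
proof -
  have pre: "defset M n C {as. length as = n \<and> as @ f as \<in> D}" if "defset M (n + m) B D" for D
    using defset_mono[OF defset_graph_preimage[OF f that] C] .
  let ?pre = "\<lambda>D. {as. length as = n \<and> as @ f as \<in> D}"
  show ?thesis
    unfolding keisler_def pushforward_def
  proof (intro conjI allI impI)
    show "0 \<le> \<mu> (?pre D)" if "defset M (n + m) B D" for D
      using keisler_nonneg[OF \<mu> pre[OF that]] .
    have "?pre {cs. length cs = n + m} = {as. length as = n}"
      using deffun_length[OF f] by auto
    then show "\<mu> (?pre {cs. length cs = n + m}) = 1"
      using keisler_all[OF \<mu>] by simp
    fix D E
    assume DE: "defset M (n + m) B D \<and> defset M (n + m) B E \<and> D \<inter> E = {}"
    have "?pre (D \<union> E) = ?pre D \<union> ?pre E" "?pre D \<inter> ?pre E = {}"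
      using DE by auto
    then show "\<mu> (?pre (D \<union> E)) = \<mu> (?pre D) + \<mu> (?pre E)"
      using keisler_Un[OF \<mu> pre pre] DE by simp
  qed
qed

lemma pi_x_pushforward_graph:
  assumes "\<forall>as. length as = n \<longrightarrow> length (f as) = m" and "D \<subseteq> {as. length as = n}"
  shows "pi_x n m (pushforward n (\<lambda>as. as @ f as) \<mu>) D = \<mu> D"
proof -
  have "{as. length as = n \<and> as @ f as \<in> {as @ bs | as bs. as \<in> D \<and> length bs = m}} = D"
    using assms by (auto simp: append_eq_append_conv)
  then show ?thesis
    unfolding pi_x_def pushforward_def by simp
qed

lemma pi_y_concentrated_on_graph:
  assumes \<omega>: "keisler M (n + m) B \<omega>" and f: "deffun M n m A f" and "A \<subseteq> B"
    and full: "\<omega> {as @ f as | as. length as = n} = 1"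
    and marginal: "\<forall>D. defset M n B D \<longrightarrow> pi_x n m \<omega> D = \<mu> D"
    and E: "defset M m B E"
  shows "pi_y n m \<omega> E = pushforward n f \<mu> E"
proof -
  let ?G = "{as @ f as | as. length as = n}"
  let ?Y = "{as @ bs | as bs. length as = n \<and> bs \<in> E}"
  let ?F = "{as. length as = n \<and> f as \<in> E}"
  let ?X = "{as @ bs | as bs. as \<in> ?F \<and> length bs = m}"
  have G: "defset M (n + m) B ?G"
    using defset_mono[OF defset_graph[OF f] \<open>A \<subseteq> B\<close>] .
  have Y: "defset M (n + m) B ?Y"
    using defset_shift[OF E] .
  have flen: "\<forall>as. length as = n \<longrightarrow> length (f as) = m"
    using deffun_length[OF f] by blast
  have "?F = {as. length as = n \<and> as @ f as \<in> ?Y}"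
    using flen by auto
  then have F: "defset M n B ?F"
    using defset_graph_preimage[OF f Y] Un_absorb1[OF \<open>A \<subseteq> B\<close>] by simp
  have X: "defset M (n + m) B ?X"
    using defset_cylinder[OF F] .
  have "cs \<in> ?Y \<longleftrightarrow> cs \<in> ?X" if "cs \<in> ?G" for cs
  proof -
    obtain as where as: "length as = n" "cs = as @ f as"
      using \<open>cs \<in> ?G\<close> by blast
    have "as @ f as \<in> ?Y \<longleftrightarrow> f as \<in> E"
      using as(1) flen by auto
    moreover have "as @ f as \<in> ?X \<longleftrightarrow> f as \<in> E"
      using as(1) flen by auto
    ultimately show ?thesis
      using as(2) by simp
  qed
  then have "?Y \<inter> ?G = ?X \<inter> ?G"
    by blast
  then have "\<omega> ?Y = \<omega> ?X"
    using keisler_Int_full[OF \<omega> Y G full] keisler_Int_full[OF \<omega> X G full] by simp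
  also have "\<dots> = \<mu> ?F"
    using marginal[rule_format, OF F] unfolding pi_x_def .
  finally show ?thesis
    unfolding pi_y_def pushforward_def .
qed

theorem proposition3p10:
  fixes M :: "('f, 'r, 'a) struc" and K :: "'k set"
    and n m :: nat and A :: "'a set"
    and \<mu> :: "'a list set \<Rightarrow> real" and f :: "'a list \<Rightarrow> 'a list"
  assumes "monster M K"
    and "small K A"
    and "keisler M n UNIV \<mu>"
    and "deffun M n m A f"
  shows "geqE M n m A \<mu> (pushforward n f \<mu>)"
proof -
  let ?G = "{as @ f as | as. length as = n}"
  let ?lam = "pushforward n (\<lambda>as. as @ f as) \<mu>"
  have flen: "\<forall>as. length as = n \<longrightarrow> length (f as) = m"
    using deffun_length[OF assms(4)] by blast
  have lam: "keisler M (n + m) A ?lam"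
    using keisler_pushforward_graph[OF assms(3,4)] by blast
  have "{as. length as = n \<and> as @ f as \<in> ?G} = {as. length as = n}"
    by blast
  then have "?lam ?G = 1"
    using keisler_all[OF assms(3)] unfolding pushforward_def by simp
  show ?thesis
    unfolding geqE_def
  proof (intro exI[of _ ?lam] conjI allI impI lam)
    show "pi_x n m ?lam D = \<mu> D" if "defset M n A D" for D
      using pi_x_pushforward_graph[OF flen defset_length[OF that]] .
    fix \<omega> E
    assume \<omega>: "keisler M (n + m) UNIV \<omega> \<and> (\<forall>D. defset M (n + m) A D \<longrightarrow> \<omega> D = ?lam D) \<and>
        (\<forall>D. defset M n UNIV D \<longrightarrow> pi_x n m \<omega> D = \<mu> D)"
      and E: "defset M m UNIV E"
    with defset_graph[OF assms(4)] \<open>?lam ?G = 1\<close> have "\<omega> ?G = 1"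
      by simp
    with \<omega> E assms(4) show "pi_y n m \<omega> E = pushforward n f \<mu> E"
      by (intro pi_y_concentrated_on_graph) auto
  qed
qed

end
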